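(* Let $k\ge1$, $s>0$, and let $R\subseteq R'$ be rectangles in $\mathbb{Z}^2$ with dimensions $(a,b)$ and $(a+\ell,b+m)$ respectively, $a,b\ge1$, $\ell,m\ge0$. Then \[ \mathbf{P}\big(D(R,R')\big)\le\exp\!\Big(-(m-2(k-1))\,g_k(as)-(\ell-2(k-1))\,g_k(bs)+\ell m\, s\,\exp\!\big(k\,(g_k(as)+g_k(bs))\big)\Big). \]
   Context: Let $q=e^{-s}$; each site of $\mathbb{Z}^2$ is independently nonempty with probability $1-q$ and empty with probability $q$. A rectangle $\{x_0,\dots,x_0+a-1\}\times\{y_0,\dots,y_0+b-1\}$ has dimensions $(a,b)$. For $R\subseteq R'$, let the left strip $L$ (resp. right strip $L'$) be the set of sites of $R'$ lying in columns strictly to the left (resp. right) of all columns of $R$, and the bottom strip $T$ (resp. top strip $T'$) the set of sites of $R'$ in rows strictly below (resp. above) all rows of $R$; these strips extend over the full height (resp. width) of $R'$, so the left and right strips together have $\ell$ columns and the top and bottom strips together have $m$ rows. $D(R,R')$ is the event that neither $L$ nor $L'$ contains $k$ consecutive columns all of whose sites are empty, and neither $T$ nor $T'$ contains $k$ consecutive rows all of whose sites are empty. Here $g_k(z)=-\log f_k(e^{-z})$, where $f_k:[0,1]\to[0,1]$ is the unique decreasing function with $f_k(x)^k-f_k(x)^{k+1}=x^k-x^{k+1}$. *)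

theory Defs
  imports "HOL-Analysis.Analysis" "HOL-Probability.Probability"
begin

definition rect :: "int \<Rightarrow> int \<Rightarrow> nat \<Rightarrow> nat \<Rightarrow> (int \<times> int) set" where
  "rect x0 y0 a b = {x0 .. x0 + int a - 1} \<times> {y0 .. y0 + int b - 1}"

text \<open>Configurations: w z = True means site z is empty.\<close>
type_synonym config = "int \<times> int \<Rightarrow> bool"

definition empty_cols :: "nat \<Rightarrow> int set \<Rightarrow> int set \<Rightarrow> config \<Rightarrow> bool" where
  "empty_cols k C Rows w \<longleftrightarrow>
     (\<exists>c. {c .. c + int k - 1} \<subseteq> C \<and> (\<forall>x \<in> {c .. c + int k - 1}. \<forall>y \<in> Rows. w (x, y)))"

definition empty_rows :: "nat \<Rightarrow> int set \<Rightarrow> int set \<Rightarrow> config \<Rightarrow> bool" where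
  "empty_rows k Rs Cols w \<longleftrightarrow>
     (\<exists>c. {c .. c + int k - 1} \<subseteq> Rs \<and> (\<forall>y \<in> {c .. c + int k - 1}. \<forall>x \<in> Cols. w (x, y)))"

text \<open>The event D(R,R') for R = rect x0 y0 a b and R' = rect x0' y0' a' b'.\<close>
definition D_event :: "nat \<Rightarrow> int \<Rightarrow> int \<Rightarrow> nat \<Rightarrow> nat \<Rightarrow> int \<Rightarrow> int \<Rightarrow> nat \<Rightarrow> nat \<Rightarrow> config set" where
  "D_event k x0 y0 a b x0' y0' a' b' =
     {w. \<not> empty_cols k {x0' .. x0 - 1} {y0' .. y0' + int b' - 1} w
       \<and> \<not> empty_cols k {x0 + int a .. x0' + int a' - 1} {y0' .. y0' + int b' - 1} w
       \<and> \<not> empty_rows k {y0' .. y0 - 1} {x0' .. x0' + int a' - 1} w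
       \<and> \<not> empty_rows k {y0 + int b .. y0' + int b' - 1} {x0' .. x0' + int a' - 1} w}"

text \<open>Sites outside A are fixed to False; the event D
  only depends on sites of R', so this is the law of the configuration restricted to R'.\<close>
definition site_pmf :: "real \<Rightarrow> (int \<times> int) set \<Rightarrow> config pmf" where
  "site_pmf s A = Pi_pmf A False (\<lambda>_. bernoulli_pmf (exp (- s)))"

definition f_fun :: "nat \<Rightarrow> real \<Rightarrow> real" where
  "f_fun k = (THE f. f \<in> {0..1} \<rightarrow>\<^sub>E {0..1} \<and> antimono_on {0..1} f \<and>
      (\<forall>x \<in> {0..1}. f x ^ k - f x ^ (k + 1) = x ^ k - x ^ (k + 1)))"

definition g_fun :: "nat \<Rightarrow> real \<Rightarrow> real" where
  "g_fun k z = - ln (f_fun k (exp (- z)))"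

end

theory Submission
  imports Defs
begin

text \<open>
  Let q = exp(-s).  A column of R' restricted to the rows of R is empty with
  probability p = q^b, and a strip of n such columns contains no k consecutive empty ones with
  probability at most f^(n - (k - 1)), where f = f_k(p).  This one-dimensional bound follows by
  a renewal argument (decompose at the first nonempty column) from the identity
  sum_{i<k} p^i (1 - p) / f^(i+1) = 1, which is a reformulation of f^k (1 - f) = p^k (1 - p).

  The four strips of R' are not independent: the side columns and side rows meet in the
  corner sites.  We condition on the set T of nonempty corner sites.  A side line hit by T can
  never be empty; it merely cuts its strip, costing a factor f^(-k).  The remaining events only
  involve the parts of the strips crossing R, which are disjoint, hence independent.  Summing the
  resulting bound over all T gives ((1 - q) \<theta> + q)^(l m) \<le> exp(l m s \<theta>) with
  \<theta> = exp(k (g_k(a s) + g_k(b s))).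
\<close>

text \<open>The hump h_k(y) = y^k - y^(k+1) = y^k (1 - y) vanishes at 0 and 1, increases strictly up to
  its peak k/(k+1) and decreases strictly after it.  By definition f_k preserves h_k, and being
  decreasing it must exchange the two points of each level set.\<close>
definition hump :: "nat \<Rightarrow> real \<Rightarrow> real" where
  "hump k y = y ^ k - y ^ (k + 1)"

definition hump_peak :: "nat \<Rightarrow> real" where
  "hump_peak k = real k / (real k + 1)"

lemma hump_peak_bounds: "k \<ge> 1 \<Longrightarrow> 0 < hump_peak k \<and> hump_peak k < 1"
  unfolding hump_peak_def by (simp add: field_simps)

lemma hump_eq_mult: "hump k y = y ^ k * (1 - y)"
  unfolding hump_def by (simp add: algebra_simps)

lemma continuous_on_hump: "continuous_on A (hump k)"
  unfolding hump_def by (intro continuous_intros)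

lemma hump_deriv:
  assumes "k \<ge> 1"
  shows "DERIV (hump k) y :> y ^ (k - 1) * (real k - (real k + 1) * y)"
proof -
  have "y ^ k = y ^ (k - 1) * y"
    using assms by (metis Suc_diff_le diff_Suc_1 mult.commute power_Suc)
  then show ?thesis unfolding hump_def
    by (auto intro!: derivative_eq_intros simp: algebra_simps)
qed

lemma hump_strict_mono:
  assumes k: "k \<ge> 1" and "0 \<le> x" "x < y" "y \<le> hump_peak k"
  shows "hump k x < hump k y"
proof (rule DERIV_pos_imp_increasing_open[OF \<open>x < y\<close> _ continuous_on_hump])
  fix t assume t: "x < t" "t < y"
  have "(real k + 1) * t < (real k + 1) * y" using t by simp
  also have "\<dots> \<le> real k" using assms unfolding hump_peak_def by (simp add: field_simps)
  finally have "(real k + 1) * t < real k" .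
  then have "t ^ (k - 1) * (real k - (real k + 1) * t) > 0" using t assms by simp
  then show "\<exists>d. DERIV (hump k) t :> d \<and> d > 0" using hump_deriv[OF k] by blast
qed

lemma hump_strict_antimono:
  assumes k: "k \<ge> 1" and "hump_peak k \<le> x" "x < y" "y \<le> 1"
  shows "hump k y < hump k x"
proof -
  have "(\<lambda>t. - hump k t) x < (\<lambda>t. - hump k t) y"
  proof (rule DERIV_pos_imp_increasing_open[OF \<open>x < y\<close>])
    fix t assume t: "x < t" "t < y"
    have "real k \<le> (real k + 1) * x" using assms unfolding hump_peak_def by (simp add: field_simps)
    also have "\<dots> < (real k + 1) * t" using t by simp
    finally have "real k < (real k + 1) * t" .
    moreover have "0 < t" using t assms hump_peak_bounds[OF k] by linarith
    ultimately have "- (t ^ (k - 1) * (real k - (real k + 1) * t)) > 0"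
      by (simp add: mult_pos_neg)
    then show "\<exists>d. DERIV (\<lambda>t. - hump k t) t :> d \<and> d > 0"
      using DERIV_minus[OF hump_deriv[OF k]] by blast
  qed (intro continuous_intros continuous_on_hump)
  then show ?thesis by simp
qed

lemma hump_inj_left:
  assumes "k \<ge> 1" "0 \<le> x" "x \<le> hump_peak k" "0 \<le> y" "y \<le> hump_peak k"
    "hump k x = hump k y"
  shows "x = y"
  using hump_strict_mono[OF assms(1), of x y] hump_strict_mono[OF assms(1), of y x] assms
  by (cases x y rule: linorder_cases) auto

lemma hump_inj_right:
  assumes "k \<ge> 1" "hump_peak k \<le> x" "x \<le> 1" "hump_peak k \<le> y" "y \<le> 1"
    "hump k x = hump k y"
  shows "x = y"
  using hump_strict_antimono[OF assms(1), of x y] hump_strict_antimono[OF assms(1), of y x] assms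
  by (cases x y rule: linorder_cases) auto

lemma hump_endpoints: "hump k 1 = 0" "k \<ge> 1 \<Longrightarrow> hump k 0 = 0"
  unfolding hump_def by simp_all

lemma hump_nonneg: "0 \<le> x \<Longrightarrow> x \<le> 1 \<Longrightarrow> 0 \<le> hump k x"
  unfolding hump_eq_mult by simp

lemma hump_le_peak:
  assumes k: "k \<ge> 1" and "0 \<le> x" "x \<le> 1"
  shows "hump k x \<le> hump k (hump_peak k)"
  using hump_strict_mono[OF k, of x "hump_peak k"] hump_strict_antimono[OF k, of "hump_peak k" x] assms
  by (cases x "hump_peak k" rule: linorder_cases) auto

definition partner :: "nat \<Rightarrow> real \<Rightarrow> real" where
  "partner k x =
     (if x \<le> hump_peak k then THE y. hump_peak k \<le> y \<and> y \<le> 1 \<and> hump k y = hump k x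
      else THE y. 0 \<le> y \<and> y \<le> hump_peak k \<and> hump k y = hump k x)"

lemma partner_left:
  assumes k: "k \<ge> 1" and x: "0 \<le> x" "x \<le> hump_peak k"
  shows "hump_peak k \<le> partner k x \<and> partner k x \<le> 1 \<and> hump k (partner k x) = hump k x"
proof -
  have "\<exists>y\<ge>hump_peak k. y \<le> 1 \<and> hump k y = hump k x"
    using hump_nonneg[of x k] hump_le_peak[OF k, of x] x hump_peak_bounds[OF k]
    by (intro IVT2' continuous_on_hump) (auto simp: hump_endpoints)
  then obtain y where y: "hump_peak k \<le> y" "y \<le> 1" "hump k y = hump k x" by auto
  have "(THE y. hump_peak k \<le> y \<and> y \<le> 1 \<and> hump k y = hump k x) = y"
    by (rule the_equality) (use y hump_inj_right[OF k] in auto)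
  then show ?thesis using y x unfolding partner_def by simp
qed

lemma partner_right:
  assumes k: "k \<ge> 1" and x: "hump_peak k < x" "x \<le> 1"
  shows "0 \<le> partner k x \<and> partner k x \<le> hump_peak k \<and> hump k (partner k x) = hump k x"
proof -
  have "\<exists>y\<ge>0. y \<le> hump_peak k \<and> hump k y = hump k x"
    using hump_nonneg[of x k] hump_le_peak[OF k, of x] x hump_peak_bounds[OF k] k
    by (intro IVT' continuous_on_hump) (auto simp: hump_endpoints)
  then obtain y where y: "0 \<le> y" "y \<le> hump_peak k" "hump k y = hump k x" by auto
  have "(THE y. 0 \<le> y \<and> y \<le> hump_peak k \<and> hump k y = hump k x) = y"
    by (rule the_equality) (use y hump_inj_left[OF k] in auto)
  then show ?thesis using y x unfolding partner_def by simp
qed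

lemma partner_in_unit:
  assumes "k \<ge> 1" "0 \<le> x" "x \<le> 1"
  shows "0 \<le> partner k x" "partner k x \<le> 1" "hump k (partner k x) = hump k x"
  using partner_left[of k x] partner_right[of k x] hump_peak_bounds[of k] assms
  by (cases "x \<le> hump_peak k"; force)+

lemma partner_peak: "k \<ge> 1 \<Longrightarrow> partner k (hump_peak k) = hump_peak k"
  using partner_left[of k "hump_peak k"] hump_inj_right[of k "partner k (hump_peak k)" "hump_peak k"]
    hump_peak_bounds[of k] by auto

lemma hump_fiber:
  assumes k: "k \<ge> 1" and "0 \<le> x" "x \<le> 1" "0 \<le> y" "y \<le> 1" "hump k y = hump k x"
  shows "y = x \<or> y = partner k x"
  using assms partner_left[OF k, of x] partner_right[OF k, of x]
    hump_inj_left[OF k, of y x] hump_inj_right[OF k, of y x]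
    hump_inj_left[OF k, of y "partner k x"] hump_inj_right[OF k, of y "partner k x"]
  by (cases "x \<le> hump_peak k"; cases "y \<le> hump_peak k") auto

text \<open>The partner map is decreasing: it is the inverse of the hump on one side of the peak
  composed with the hump on the other side.\<close>
lemma partner_antimono:
  assumes k: "k \<ge> 1" and "0 \<le> x" "x \<le> y" "y \<le> 1"
  shows "partner k y \<le> partner k x"
proof -
  note L = partner_left[OF k] and R = partner_right[OF k]
  consider "y \<le> hump_peak k" | "x \<le> hump_peak k" "hump_peak k < y" | "hump_peak k < x"
    using assms by linarith
  then show ?thesis
  proof cases
    case 1
    have "hump k x \<le> hump k y" using hump_strict_mono[OF k, of x y] assms 1 by (cases "x = y") auto
    then show ?thesis using hump_strict_antimono[OF k, of "partner k x" "partner k y"] L[of x] L[of y] assms 1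
      by (cases "partner k y \<le> partner k x") auto
  next
    case 2
    then show ?thesis using L[of x] R[of y] assms by force
  next
    case 3
    have "hump k y \<le> hump k x" using hump_strict_antimono[OF k, of x y] assms 3 by (cases "x = y") auto
    then show ?thesis using hump_strict_mono[OF k, of "partner k x" "partner k y"] R[of x] R[of y] assms 3
      by (cases "partner k y \<le> partner k x") auto
  qed
qed

text \<open>Uniqueness: a decreasing self-map of [0,1] preserving the hump must be the partner map,
  since the only alternative value f x = x would contradict monotonicity near x.\<close>
lemma hump_preserving_antimono_eq_partner:
  assumes k: "k \<ge> 1"
    and range: "\<And>x. 0 \<le> x \<Longrightarrow> x \<le> 1 \<Longrightarrow> 0 \<le> f x \<and> f x \<le> 1"
    and anti: "\<And>x y. 0 \<le> x \<Longrightarrow> x \<le> y \<Longrightarrow> y \<le> 1 \<Longrightarrow> f y \<le> f x"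
    and pres: "\<And>x. 0 \<le> x \<Longrightarrow> x \<le> 1 \<Longrightarrow> hump k (f x) = hump k x"
    and x: "0 \<le> x" "x \<le> 1"
  shows "f x = partner k x"
proof -
  define c where "c = hump_peak k"
  have c: "0 < c" "c < 1" using hump_peak_bounds[OF k] unfolding c_def by auto
  have fiber: "f t = t \<or> f t = partner k t" if "0 \<le> t" "t \<le> 1" for t
    using hump_fiber[OF k that] range[OF that] pres[OF that] by blast
  consider "x < c" | "x = c" | "c < x" by linarith
  then show ?thesis
  proof cases
    case 1
    define x' where "x' = (x + c) / 2"
    have x': "x < x'" "x' < c" using 1 unfolding x'_def by auto
    show ?thesis
    proof (rule ccontr)
      assume "f x \<noteq> partner k x"
      then have "f x = x" using fiber x by blast
      then have "f x' < x'" using anti[of x x'] x x' c by auto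
      moreover have "c \<le> partner k x'" using partner_left[OF k, of x'] x x' unfolding c_def by auto
      ultimately show False using fiber[of x'] x x' c by auto
    qed
  next
    case 2
    then show ?thesis using fiber[OF x] partner_peak[OF k] unfolding c_def by auto
  next
    case 3
    define x' where "x' = (x + c) / 2"
    have x': "x' < x" "c < x'" using 3 unfolding x'_def by auto
    show ?thesis
    proof (rule ccontr)
      assume "f x \<noteq> partner k x"
      then have "f x = x" using fiber x by blast
      then have "x' < f x'" using anti[of x' x] x x' c by auto
      moreover have "partner k x' \<le> c" using partner_right[OF k, of x'] x x' unfolding c_def by auto
      ultimately show False using fiber[of x'] x x' c by auto
    qed
  qed
qed

lemma f_fun_eq_partner:
  assumes k: "k \<ge> 1"
  shows "f_fun k = restrict (partner k) {0..1}"
  unfolding f_fun_def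
proof (rule the_equality)
  show "restrict (partner k) {0..1} \<in> {0..1} \<rightarrow>\<^sub>E {0..1} \<and>
        antimono_on {0..1} (restrict (partner k) {0..1}) \<and>
        (\<forall>x\<in>{0..1}. restrict (partner k) {0..1} x ^ k - restrict (partner k) {0..1} x ^ (k + 1)
                       = x ^ k - x ^ (k + 1))"
    using partner_in_unit[OF k] partner_antimono[OF k]
    by (auto simp: monotone_on_def hump_def)
next
  fix f :: "real \<Rightarrow> real"
  assume f: "f \<in> {0..1} \<rightarrow>\<^sub>E {0..1} \<and> antimono_on {0..1} f \<and>
             (\<forall>x\<in>{0..1}. f x ^ k - f x ^ (k + 1) = x ^ k - x ^ (k + 1))"
  have "f x = partner k x" if "x \<in> {0..1}" for x
    using f that by (intro hump_preserving_antimono_eq_partner[OF k])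
      (auto simp: hump_def monotone_on_def PiE_def Pi_def)
  moreover have "f x = undefined" if "x \<notin> {0..1}" for x
    using f that by (auto simp: PiE_def extensional_def)
  ultimately show "f = restrict (partner k) {0..1}"
    by (auto simp: restrict_def)
qed

lemma f_fun_basic:
  assumes k: "k \<ge> 1" and p: "0 < p" "p < 1"
  shows "0 < f_fun k p" "f_fun k p \<le> 1"
    "f_fun k p ^ k * (1 - f_fun k p) = p ^ k * (1 - p)"
    "f_fun k p = p \<Longrightarrow> p = hump_peak k"
proof -
  have fe: "f_fun k p = partner k p" using f_fun_eq_partner[OF k] p by simp
  note P = partner_in_unit[OF k, of p]
  show eq: "f_fun k p ^ k * (1 - f_fun k p) = p ^ k * (1 - p)"
    using P p fe by (simp add: hump_eq_mult)
  show "f_fun k p \<le> 1" using P p fe by simp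
  have "f_fun k p \<noteq> 0" using eq k p by (cases k) auto
  then show "0 < f_fun k p" using P p fe by simp
  show "f_fun k p = p \<Longrightarrow> p = hump_peak k"
    using partner_left[OF k, of p] partner_right[OF k, of p] p fe by (cases "p \<le> hump_peak k") auto
qed

text \<open>The renewal identity behind the one-dimensional bound: with f = f_k(p), the weights
  p^i (1 - p) / f^(i+1) of "i successes, then a failure" sum to one over i < k.\<close>
lemma f_fun_renewal:
  assumes k: "k \<ge> 1" and p: "0 < p" "p < 1"
  shows "(\<Sum>i<k. p ^ i * (1 - p) / f_fun k p ^ (i + 1)) = 1"
proof -
  define f where "f = f_fun k p"
  note F = f_fun_basic[OF k p, folded f_def]
  define S where "S = (\<Sum>i<k. f ^ (k - Suc i) * p ^ i)"
  have geom: "(f - p) * S = f ^ k - p ^ k"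
    using power_diff_sumr2[of p k f] unfolding S_def by (simp add: algebra_simps)
  have S: "(1 - p) * S = f ^ k"
  proof (cases "f = p")
    case True
    then have pc: "(1 - p) * real k = p"
      using F(4) unfolding hump_peak_def by (simp add: field_simps)
    have "S = real k * p ^ (k - 1)"
      unfolding S_def True by (simp add: power_add[symmetric])
    then have "(1 - p) * S = ((1 - p) * real k) * p ^ (k - 1)" by (simp add: algebra_simps)
    also have "\<dots> = p * p ^ (k - 1)" using pc by simp
    also have "\<dots> = p ^ k" using k by (cases k) auto
    finally show ?thesis using True by simp
  next
    case False
    have "(f - p) * ((1 - p) * S) = (1 - p) * ((f - p) * S)" by (simp add: algebra_simps)
    also have "\<dots> = (1 - p) * (f ^ k - p ^ k)" using geom by simp
    also have "\<dots> = (f - p) * f ^ k"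
      using F(3) by (simp add: algebra_simps)
    finally have "(f - p) * ((1 - p) * S) = (f - p) * f ^ k" .
    then show ?thesis using False by simp
  qed
  have "(\<Sum>i<k. p ^ i * (1 - p) / f ^ (i + 1)) = (\<Sum>i<k. (1 - p) * (f ^ (k - Suc i) * p ^ i) / f ^ k)"
  proof (intro sum.cong refl)
    fix i assume "i \<in> {..<k}"
    then have "k = (i + 1) + (k - Suc i)" by simp
    then have "f ^ k = f ^ (i + 1) * f ^ (k - Suc i)" by (metis power_add)
    then show "p ^ i * (1 - p) / f ^ (i + 1) = (1 - p) * (f ^ (k - Suc i) * p ^ i) / f ^ k"
      using F(1) by (simp add: field_simps)
  qed
  also have "\<dots> = (1 - p) * S / f ^ k" unfolding S_def by (simp add: sum_divide_distrib sum_distrib_left)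
  also have "\<dots> = 1" using S F(1) by simp
  finally show ?thesis unfolding f_def .
qed

lemma f_fun_exp_g_fun:
  assumes k: "k \<ge> 1" and z: "z > 0"
  shows "f_fun k (exp (- z)) = exp (- g_fun k z)" "g_fun k z \<ge> 0"
proof -
  have "0 < f_fun k (exp (- z))" "f_fun k (exp (- z)) \<le> 1" using f_fun_basic[OF k] z by auto
  then show "f_fun k (exp (- z)) = exp (- g_fun k z)" "g_fun k z \<ge> 0"
    unfolding g_fun_def by simp_all
qed

definition no_run :: "nat \<Rightarrow> (int \<Rightarrow> 'w \<Rightarrow> bool) \<Rightarrow> int set \<Rightarrow> 'w set" where
  "no_run k X I = {\<omega>. \<not> (\<exists>c. {c .. c + int k - 1} \<subseteq> I \<and> (\<forall>x\<in>{c .. c + int k - 1}. X x \<omega>))}"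

definition determined_by :: "(int \<Rightarrow> 'w \<Rightarrow> bool) \<Rightarrow> int set \<Rightarrow> 'w set \<Rightarrow> bool" where
  "determined_by X I E \<longleftrightarrow> (\<forall>\<omega> \<omega>'. (\<forall>x\<in>I. X x \<omega> = X x \<omega>') \<longrightarrow> (\<omega> \<in> E \<longleftrightarrow> \<omega>' \<in> E))"

lemma no_run_antimono: "J \<subseteq> I \<Longrightarrow> no_run k X I \<subseteq> no_run k X J"
  unfolding no_run_def by blast

lemma determined_by_no_run: "J \<subseteq> I \<Longrightarrow> determined_by X I (no_run k X J)"
  unfolding determined_by_def no_run_def by (safe; metis subset_iff)+

lemma determined_by_all: "J \<subseteq> I \<Longrightarrow> determined_by X I {\<omega>. \<forall>x\<in>J. X x \<omega>}"
  unfolding determined_by_def by blast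

lemma determined_by_not: "x \<in> I \<Longrightarrow> determined_by X I {\<omega>. \<not> X x \<omega>}"
  unfolding determined_by_def by blast

lemma determined_by_Int:
  "determined_by X I E1 \<Longrightarrow> determined_by X I E2 \<Longrightarrow> determined_by X I (E1 \<inter> E2)"
  unfolding determined_by_def by blast

lemma no_run_first_failure:
  assumes "k \<le> n"
  shows "no_run k X {lo..<lo + int n} \<subseteq>
    (\<Union>i<k. {\<omega>. \<forall>x\<in>{lo..<lo + int i}. X x \<omega>} \<inter> {\<omega>. \<not> X (lo + int i) \<omega>}
            \<inter> no_run k X {lo + int i + 1..<lo + int n})"
proof
  fix \<omega> assume \<omega>: "\<omega> \<in> no_run k X {lo..<lo + int n}"
  have "\<exists>i. i < k \<and> \<not> X (lo + int i) \<omega>"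
  proof (rule ccontr)
    assume "\<nexists>i. i < k \<and> \<not> X (lo + int i) \<omega>"
    then have all: "X (lo + int i) \<omega>" if "i < k" for i using that by blast
    have "X x \<omega>" if "x \<in> {lo .. lo + int k - 1}" for x
      using all[of "nat (x - lo)"] that by auto
    then have "\<forall>x\<in>{lo .. lo + int k - 1}. X x \<omega>" by blast
    moreover have "{lo .. lo + int k - 1} \<subseteq> {lo..<lo + int n}" using assms by auto
    ultimately show False using \<omega> unfolding no_run_def by blast
  qed
  then obtain i where i: "i < k" "\<not> X (lo + int i) \<omega>"
    and least: "\<forall>j<i. \<not> (j < k \<and> \<not> X (lo + int j) \<omega>)"
    unfolding exists_least_iff[of "\<lambda>i. i < k \<and> \<not> X (lo + int i) \<omega>"] by blast
  have before: "\<forall>j<i. X (lo + int j) \<omega>" using least i(1) by auto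
  have "X x \<omega>" if "x \<in> {lo..<lo + int i}" for x
    using before[rule_format, of "nat (x - lo)"] that by auto
  then have "\<forall>x\<in>{lo..<lo + int i}. X x \<omega>" by blast
  moreover have "\<omega> \<in> no_run k X {lo + int i + 1..<lo + int n}"
    using \<omega> no_run_antimono[of "{lo + int i + 1..<lo + int n}" "{lo..<lo + int n}" k X] by auto
  ultimately show "\<omega> \<in> (\<Union>i<k. {\<omega>. \<forall>x\<in>{lo..<lo + int i}. X x \<omega>} \<inter> {\<omega>. \<not> X (lo + int i) \<omega>}
            \<inter> no_run k X {lo + int i + 1..<lo + int n})" using i by blast
qed

locale independent_line =
  fixes \<mu> :: "'w pmf" and X :: "int \<Rightarrow> 'w \<Rightarrow> bool" and pp :: "int \<Rightarrow> real"
  assumes indep: "\<And>I1 I2 E1 E2. I1 \<inter> I2 = {} \<Longrightarrow> determined_by X I1 E1 \<Longrightarrow>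
      determined_by X I2 E2 \<Longrightarrow>
      measure_pmf.prob \<mu> (E1 \<inter> E2) = measure_pmf.prob \<mu> E1 * measure_pmf.prob \<mu> E2"
    and prob_all: "\<And>I. finite I \<Longrightarrow> measure_pmf.prob \<mu> {\<omega>. \<forall>x\<in>I. X x \<omega>} = (\<Prod>x\<in>I. pp x)"
begin

lemma prob_single: "measure_pmf.prob \<mu> {\<omega>. X x \<omega>} = pp x"
  using prob_all[of "{x}"] by simp

lemma prob_not: "measure_pmf.prob \<mu> {\<omega>. \<not> X x \<omega>} = 1 - pp x"
  using measure_pmf.prob_compl[of "{\<omega>. X x \<omega>}" \<mu>] prob_single[of x]
  by (simp add: Compl_eq_Diff_UNIV[symmetric] Collect_neg_eq)

lemma prob_run_then_fail:
  assumes "finite J" "x \<notin> J" "J \<inter> I = {}" "x \<notin> I" "determined_by X I E"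
  shows "measure_pmf.prob \<mu> ({\<omega>. \<forall>y\<in>J. X y \<omega>} \<inter> {\<omega>. \<not> X x \<omega>} \<inter> E)
       = (\<Prod>y\<in>J. pp y) * (1 - pp x) * measure_pmf.prob \<mu> E"
proof -
  have "measure_pmf.prob \<mu> (({\<omega>. \<forall>y\<in>J. X y \<omega>} \<inter> {\<omega>. \<not> X x \<omega>}) \<inter> E)
      = measure_pmf.prob \<mu> ({\<omega>. \<forall>y\<in>J. X y \<omega>} \<inter> {\<omega>. \<not> X x \<omega>}) * measure_pmf.prob \<mu> E"
    using assms by (intro indep[of "insert x J" I])
      (auto intro!: determined_by_Int determined_by_all determined_by_not)
  also have "measure_pmf.prob \<mu> ({\<omega>. \<forall>y\<in>J. X y \<omega>} \<inter> {\<omega>. \<not> X x \<omega>})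
      = (\<Prod>y\<in>J. pp y) * (1 - pp x)"
    using assms by (subst indep[of J "{x}"])
      (auto intro!: determined_by_all determined_by_not simp: prob_all prob_not)
  finally show ?thesis .
qed

lemma prob_first_failure_uniform:
  assumes uniform: "\<forall>x\<in>{lo..<lo + int n}. pp x = p" and i: "i < n"
  shows "measure_pmf.prob \<mu> ({\<omega>. \<forall>x\<in>{lo..<lo + int i}. X x \<omega>} \<inter> {\<omega>. \<not> X (lo + int i) \<omega>}
           \<inter> no_run k X {lo + int i + 1..<lo + int n})
       = p ^ i * (1 - p)
         * measure_pmf.prob \<mu> (no_run k X {lo + int i + 1..<(lo + int i + 1) + int (n - i - 1)})"
proof -
  have "(\<Prod>y\<in>{lo..<lo + int i}. pp y) = p ^ i" using uniform i by (simp add: prod_constant)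
  moreover have "pp (lo + int i) = p" using uniform i by auto
  moreover have "{lo + int i + 1..<lo + int n} = {lo + int i + 1..<(lo + int i + 1) + int (n - i - 1)}"
    using i by auto
  ultimately show ?thesis
    by (subst prob_run_then_fail[where I = "{lo + int i + 1..<lo + int n}"])
      (auto intro: determined_by_no_run)
qed

lemma no_run_bound_uniform:
  assumes k: "k \<ge> 1" and f: "0 < f" "f \<le> 1"
    and renewal: "(\<Sum>i<k. p ^ i * (1 - p) / f ^ (i + 1)) \<le> 1"
    and uniform: "\<forall>x\<in>{lo..<lo + int n}. pp x = p"
  shows "measure_pmf.prob \<mu> (no_run k X {lo..<lo + int n}) \<le> f powr (real n - (real k - 1))"
  using uniform
proof (induction n arbitrary: lo rule: less_induct)
  case (less n)
  show ?case
  proof (cases "n < k")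
    case True
    have "measure_pmf.prob \<mu> (no_run k X {lo..<lo + int n}) \<le> 1" by simp
    also have "1 \<le> f powr (real n - (real k - 1))"
      using True f powr_mono'[of "real n - (real k - 1)" 0 f] by simp
    finally show ?thesis .
  next
    case False
    define piece where "piece i = {\<omega>. \<forall>x\<in>{lo..<lo + int i}. X x \<omega>} \<inter> {\<omega>. \<not> X (lo + int i) \<omega>}
      \<inter> no_run k X {lo + int i + 1..<lo + int n}" for i
    have "pp lo = p" using less.prems False k by auto
    then have p: "0 \<le> p" "p \<le> 1" using prob_single[of lo] by (metis measure_nonneg,
        metis measure_pmf.prob_le_1)
    have piece: "measure_pmf.prob \<mu> (piece i)
        \<le> f powr (real n - (real k - 1)) * (p ^ i * (1 - p) / f ^ (i + 1))" if i: "i < k" for i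
    proof -
      have "i < n" using i False by simp
      have "measure_pmf.prob \<mu> (piece i) \<le> p ^ i * (1 - p) * f powr (real (n - i - 1) - (real k - 1))"
        unfolding piece_def prob_first_failure_uniform[OF less.prems \<open>i < n\<close>] using p \<open>i < n\<close> less.prems
        by (intro mult_left_mono less.IH) auto
      also have "real (n - i - 1) - (real k - 1) = (real n - (real k - 1)) - real (i + 1)"
        using \<open>i < n\<close> by simp
      also have "f powr ((real n - (real k - 1)) - real (i + 1)) = f powr (real n - (real k - 1)) / f ^ (i + 1)"
        using f(1) by (metis powr_diff powr_realpow)
      finally show ?thesis by (simp add: field_simps)
    qed
    have "measure_pmf.prob \<mu> (no_run k X {lo..<lo + int n}) \<le> (\<Sum>i<k. measure_pmf.prob \<mu> (piece i))"
      using no_run_first_failure[of k n X lo] False unfolding piece_def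
      by (intro order.trans[OF measure_pmf.finite_measure_mono
            measure_pmf.finite_measure_subadditive_finite]) auto
    also have "\<dots> \<le> (\<Sum>i<k. f powr (real n - (real k - 1)) * (p ^ i * (1 - p) / f ^ (i + 1)))"
      by (intro sum_mono piece) auto
    also have "\<dots> = f powr (real n - (real k - 1)) * (\<Sum>i<k. p ^ i * (1 - p) / f ^ (i + 1))"
      by (simp only: sum_distrib_left)
    also have "\<dots> \<le> f powr (real n - (real k - 1))"
      using renewal by (intro mult_left_le) auto
    finally show ?thesis .
  qed
qed

text \<open>One-dimensional bound: every index x with pp x = 0 (a variable that is never true)
  cuts the interval into two independent pieces, costing an extra factor f^(-k).\<close>
lemma no_run_bound:
  assumes k: "k \<ge> 1" and f: "0 < f" "f \<le> 1"
    and renewal: "(\<Sum>i<k. p ^ i * (1 - p) / f ^ (i + 1)) \<le> 1"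
    and two_values: "\<And>x. pp x = 0 \<or> pp x = p"
  shows "measure_pmf.prob \<mu> (no_run k X {lo..<lo + int n})
     \<le> f powr (real n - (real k - 1) - real k * real (card {x\<in>{lo..<lo + int n}. pp x = 0}))"
proof (induction n arbitrary: lo rule: less_induct)
  case (less n)
  define I where "I = {lo..<lo + int n}"
  define zeros where "zeros J = card {x\<in>J. pp x = 0}" for J
  show ?case
  proof (cases "\<exists>x\<in>I. pp x = 0")
    case True
    then obtain x where x: "x \<in> I" "pp x = 0" by blast
    define n1 where "n1 = nat (x - lo)"
    define n2 where "n2 = n - n1 - 1"
    define L where "L = {lo..<lo + int n1}"
    define R where "R = {x + 1..<(x + 1) + int n2}"
    have n: "n = n1 + n2 + 1" "x = lo + int n1" using x unfolding n1_def n2_def I_def by auto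
    have LR: "L \<subseteq> I" "R \<subseteq> I" "L \<inter> R = {}" "I = L \<union> R \<union> {x}" "x \<notin> L \<union> R"
      unfolding L_def R_def I_def using n by auto
    have fin: "finite L" "finite R" unfolding L_def R_def by auto
    have "{y\<in>I. pp y = 0} = insert x ({y\<in>L. pp y = 0} \<union> {y\<in>R. pp y = 0})"
      using LR(4) x by auto
    then have zeros: "zeros I = zeros L + zeros R + 1"
      unfolding zeros_def using LR(3,5) fin by (simp add: card_Un_disjoint disjoint_iff)
    have "measure_pmf.prob \<mu> (no_run k X I) \<le> measure_pmf.prob \<mu> (no_run k X L \<inter> no_run k X R)"
      using no_run_antimono[OF LR(1), of k X] no_run_antimono[OF LR(2), of k X]
      by (intro measure_pmf.finite_measure_mono) auto
    also have "\<dots> = measure_pmf.prob \<mu> (no_run k X L) * measure_pmf.prob \<mu> (no_run k X R)"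
      by (rule indep[OF LR(3)]) (auto intro: determined_by_no_run)
    also have "\<dots> \<le> f powr (real n1 - (real k - 1) - real k * real (zeros L))
                  * f powr (real n2 - (real k - 1) - real k * real (zeros R))"
      unfolding L_def R_def zeros_def using n by (intro mult_mono less.IH) auto
    also have "\<dots> = f powr (real n - (real k - 1) - real k * real (zeros I))"
      unfolding powr_add[symmetric] zeros using n by (simp add: algebra_simps)
    finally show ?thesis unfolding I_def zeros_def .
  next
    case False
    then have "{x\<in>I. pp x = 0} = {}" by blast
    then have "zeros I = 0" unfolding zeros_def by (metis card.empty)
    moreover have "\<forall>x\<in>I. pp x = p" using False two_values by blast
    ultimately show ?thesis
      using no_run_bound_uniform[OF k f renewal] unfolding I_def zeros_def by simp
  qed
qed

end

definition depends_on :: "'a set \<Rightarrow> ('a \<Rightarrow> 'b) set \<Rightarrow> bool" where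
  "depends_on A E \<longleftrightarrow> (\<forall>\<omega> \<omega>'. (\<forall>z\<in>A. \<omega> z = \<omega>' z) \<longrightarrow> (\<omega> \<in> E \<longleftrightarrow> \<omega>' \<in> E))"

lemma depends_on_mono: "depends_on A E \<Longrightarrow> A \<subseteq> B \<Longrightarrow> depends_on B E"
  unfolding depends_on_def by blast

lemma depends_on_Int: "depends_on A E1 \<Longrightarrow> depends_on A E2 \<Longrightarrow> depends_on A (E1 \<inter> E2)"
  unfolding depends_on_def by blast

lemma depends_on_UNIV: "depends_on A UNIV"
  unfolding depends_on_def by auto

lemma Pi_pmf_prob_Int_split:
  fixes P :: "'a \<Rightarrow> 'b pmf"
  assumes fin: "finite A" and disj: "A1 \<inter> A2 = {}"
    and E1: "depends_on A1 E1" and E2: "depends_on A2 E2"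
  shows "measure_pmf.prob (Pi_pmf A dflt P) (E1 \<inter> E2) =
         measure_pmf.prob (Pi_pmf (A \<inter> A1) dflt P) E1 * measure_pmf.prob (Pi_pmf (A - A1) dflt P) E2"
proof -
  define B1 where "B1 = A \<inter> A1"
  define B2 where "B2 = A - A1"
  define merge where "merge = (\<lambda>(f, g) x. if x \<in> B1 then f x else (g x :: 'b))"
  define Q where "Q = pair_pmf (Pi_pmf B1 dflt P) (Pi_pmf B2 dflt P)"
  define S1 where "S1 = set_pmf (Pi_pmf B1 dflt P)"
  define S2 where "S2 = set_pmf (Pi_pmf B2 dflt P)"
  have fins: "finite B1" "finite B2" using fin unfolding B1_def B2_def by auto
  have split: "Pi_pmf A dflt P = map_pmf merge Q"
  proof -
    have "A = B1 \<union> B2" "B1 \<inter> B2 = {}" unfolding B1_def B2_def by auto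
    then show ?thesis unfolding Q_def merge_def by (simp add: Pi_pmf_union[OF fins])
  qed
  have dflt: "f x = dflt" "g x = dflt" if "f \<in> S1" "g \<in> S2" "x \<notin> B1" "x \<notin> B2" for f g x
    using set_Pi_pmf_subset[OF fins(1), of dflt P] set_Pi_pmf_subset[OF fins(2), of dflt P] that
    unfolding S1_def S2_def by blast+
  have merge_E1: "merge (f, g) \<in> E1 \<longleftrightarrow> f \<in> E1" if "f \<in> S1" "g \<in> S2" for f g
  proof -
    have "merge (f, g) z = f z" if "z \<in> A1" for z
      using dflt[OF \<open>f \<in> S1\<close> \<open>g \<in> S2\<close>, of z] that unfolding merge_def B1_def B2_def by auto
    then show ?thesis using E1 unfolding depends_on_def by blast
  qed
  have merge_E2: "merge (f, g) \<in> E2 \<longleftrightarrow> g \<in> E2" for f g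
  proof -
    have "merge (f, g) z = g z" if "z \<in> A2" for z
      using that disj unfolding merge_def B1_def by auto
    then show ?thesis using E2 unfolding depends_on_def by blast
  qed
  have support: "merge -` (E1 \<inter> E2) \<inter> set_pmf Q = (E1 \<inter> S1) \<times> (E2 \<inter> S2)"
    using merge_E1 merge_E2 unfolding Q_def S1_def S2_def by auto
  have "measure_pmf.prob (Pi_pmf A dflt P) (E1 \<inter> E2) = measure_pmf.prob Q (merge -` (E1 \<inter> E2) \<inter> set_pmf Q)"
    unfolding split by (simp add: measure_Int_set_pmf)
  also have "\<dots> = measure_pmf.prob (Pi_pmf B1 dflt P) (E1 \<inter> S1) * measure_pmf.prob (Pi_pmf B2 dflt P) (E2 \<inter> S2)"
    unfolding support by (unfold Q_def, rule measure_pmf_prob_product) (auto simp: S1_def S2_def intro: countable_subset)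
  also have "\<dots> = measure_pmf.prob (Pi_pmf B1 dflt P) E1 * measure_pmf.prob (Pi_pmf B2 dflt P) E2"
    unfolding S1_def S2_def by (simp add: measure_Int_set_pmf)
  finally show ?thesis unfolding B1_def B2_def .
qed

lemma Pi_pmf_indep:
  fixes P :: "'a \<Rightarrow> 'b pmf"
  assumes fin: "finite A" and disj: "A1 \<inter> A2 = {}"
    and E1: "depends_on A1 E1" and E2: "depends_on A2 E2"
  shows "measure_pmf.prob (Pi_pmf A dflt P) (E1 \<inter> E2) =
         measure_pmf.prob (Pi_pmf A dflt P) E1 * measure_pmf.prob (Pi_pmf A dflt P) E2"
  using Pi_pmf_prob_Int_split[OF fin disj E1 E2, of dflt P]
    Pi_pmf_prob_Int_split[OF fin disj E1 depends_on_UNIV, of dflt P]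
    Pi_pmf_prob_Int_split[OF fin disj depends_on_UNIV E2, of dflt P]
  by simp

lemma prob_Pi_bernoulli_pattern:
  fixes A K T :: "'a set"
  assumes fin: "finite A" and sub: "K \<subseteq> A" "T \<subseteq> K" and q: "0 \<le> q" "q \<le> 1"
  shows "measure_pmf.prob (Pi_pmf A False (\<lambda>_. bernoulli_pmf q)) {\<omega>. {z\<in>K. \<not> \<omega> z} = T}
       = (1 - q) ^ card T * q ^ card (K - T)"
proof -
  define B where "B z = (if z \<in> T then {False} else if z \<in> K then {True} else UNIV)" for z
  have "{\<omega>. {z\<in>K. \<not> \<omega> z} = T} = Pi A B" using sub unfolding B_def Pi_def by auto
  then have "measure_pmf.prob (Pi_pmf A False (\<lambda>_. bernoulli_pmf q)) {\<omega>. {z\<in>K. \<not> \<omega> z} = T}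
      = (\<Prod>z\<in>A. measure_pmf.prob (bernoulli_pmf q) (B z))"
    using measure_Pi_pmf_Pi[OF fin] by simp
  also have "\<dots> = (\<Prod>z\<in>A. (if z \<in> T then 1 - q else 1) * (if z \<in> K - T then q else 1))"
    using q by (intro prod.cong refl) (auto simp: B_def measure_pmf_single)
  also have "\<dots> = (\<Prod>z\<in>{z\<in>A. z \<in> T}. 1 - q) * (\<Prod>z\<in>{z\<in>A. z \<in> K - T}. q)"
    using fin by (simp only: prod.distrib prod.inter_filter)
  also have "{z\<in>A. z \<in> T} = T" using sub by auto
  also have "{z\<in>A. z \<in> K - T} = K - T" using sub by auto
  finally show ?thesis by simp
qed

lemma prob_Pi_bernoulli_all:
  fixes A K :: "'a set"
  assumes fin: "finite A" and sub: "K \<subseteq> A" and q: "0 \<le> q" "q \<le> 1"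
  shows "measure_pmf.prob (Pi_pmf A False (\<lambda>_. bernoulli_pmf q)) {\<omega>. \<forall>z\<in>K. \<omega> z} = q ^ card K"
  using prob_Pi_bernoulli_pattern[OF fin sub, of "{}" q] q by (simp add: Ball_def)

text \<open>Lines of a grid: pos u v is the site at position v of line u (a column or a row).\<close>
definition line_empty :: "(int \<Rightarrow> int \<Rightarrow> 'a) \<Rightarrow> (int \<Rightarrow> bool) \<Rightarrow> int set \<Rightarrow> int \<Rightarrow> ('a \<Rightarrow> bool) \<Rightarrow> bool"
  where "line_empty pos good Om u \<omega> \<longleftrightarrow> good u \<and> (\<forall>v\<in>Om. \<omega> (pos u v))"

lemma depends_on_line_empty:
  assumes "determined_by (line_empty pos good Om) J E"
  shows "depends_on (case_prod pos ` (J \<times> Om)) E"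
proof (unfold depends_on_def, intro allI impI)
  fix \<omega> \<omega>' :: "'a \<Rightarrow> bool"
  assume "\<forall>z\<in>case_prod pos ` (J \<times> Om). \<omega> z = \<omega>' z"
  then have "\<forall>x\<in>J. line_empty pos good Om x \<omega> = line_empty pos good Om x \<omega>'"
    unfolding line_empty_def by auto
  then show "\<omega> \<in> E \<longleftrightarrow> \<omega>' \<in> E" using assms unfolding determined_by_def by blast
qed

lemma grid_lines_independent:
  fixes pos :: "int \<Rightarrow> int \<Rightarrow> 'a" and A :: "'a set"
  assumes inj: "\<And>u v u' v'. pos u v = pos u' v' \<Longrightarrow> u = u' \<and> v = v'"
    and A: "finite A" "case_prod pos ` ({u. good u} \<times> Om) \<subseteq> A"
    and q: "0 \<le> q" "q \<le> 1"
  shows "independent_line (Pi_pmf A False (\<lambda>_. bernoulli_pmf q)) (line_empty pos good Om)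
           (\<lambda>u. if good u then q ^ card Om else 0)"
proof
  define \<mu> where "\<mu> = Pi_pmf A False (\<lambda>_. bernoulli_pmf q)"
  define X where "X = line_empty pos good Om"
  define pp where "pp u = (if good u then q ^ card Om else 0)" for u
  have pos_disj: "case_prod pos ` (I1 \<times> Om) \<inter> case_prod pos ` (I2 \<times> Om) = {}" if "I1 \<inter> I2 = {}" for I1 I2
    using that inj by fastforce
  show "measure_pmf.prob \<mu> (E1 \<inter> E2) = measure_pmf.prob \<mu> E1 * measure_pmf.prob \<mu> E2"
    if "I1 \<inter> I2 = {}" "determined_by X I1 E1" "determined_by X I2 E2" for I1 I2 E1 E2
    using Pi_pmf_indep[OF A(1) pos_disj[OF that(1)] depends_on_line_empty depends_on_line_empty]
      that(2,3) unfolding \<mu>_def X_def by blast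
  fix I :: "int set" assume I: "finite I"
  show "measure_pmf.prob \<mu> {\<omega>. \<forall>x\<in>I. X x \<omega>} = (\<Prod>x\<in>I. pp x)"
  proof (cases "\<forall>u\<in>I. good u")
    case False
    then have "{\<omega>. \<forall>x\<in>I. X x \<omega>} = {}" "(\<Prod>x\<in>I. pp x) = 0"
      using I unfolding X_def line_empty_def pp_def by auto
    then show ?thesis by (metis measure_empty)
  next
    case True
    have inj_on: "inj_on (case_prod pos) (I \<times> Om)" using inj by (auto simp: inj_on_def)
    have "{\<omega>. \<forall>x\<in>I. X x \<omega>} = {\<omega>. \<forall>z\<in>case_prod pos ` (I \<times> Om). \<omega> z}"
      using True unfolding X_def line_empty_def by auto
    also have "measure_pmf.prob \<mu> \<dots> = q ^ card (case_prod pos ` (I \<times> Om))"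
      unfolding \<mu>_def using True A(2) q by (intro prob_Pi_bernoulli_all[OF A(1)]) auto
    also have "q ^ card (case_prod pos ` (I \<times> Om)) = q ^ (card I * card Om)"
      using card_image[OF inj_on] by (simp add: card_cartesian_product)
    also have "\<dots> = (\<Prod>x\<in>I. pp x)"
      using True unfolding pp_def by (simp add: power_mult[symmetric] mult.commute)
    finally show ?thesis .
  qed
qed

lemma line_no_run_bound:
  fixes pos :: "int \<Rightarrow> int \<Rightarrow> 'a" and A :: "'a set"
  assumes inj: "\<And>u v u' v'. pos u v = pos u' v' \<Longrightarrow> u = u' \<and> v = v'"
    and A: "finite A" "case_prod pos ` ({u. good u} \<times> Om) \<subseteq> A"
    and q: "0 < q" "q < 1" and k: "k \<ge> 1" and Om: "finite Om" "Om \<noteq> {}"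
  shows "measure_pmf.prob (Pi_pmf A False (\<lambda>_. bernoulli_pmf q)) (no_run k (line_empty pos good Om) {lo..hi})
     \<le> f_fun k (q ^ card Om) powr (real (card {lo..hi}) - (real k - 1)
          - real k * real (card {u\<in>{lo..hi}. \<not> good u}))"
proof -
  define p where "p = q ^ card Om"
  define pp where "pp u = (if good u then p else 0)" for u
  have "card Om > 0" using Om by (simp add: card_gt_0_iff)
  then have p: "0 < p" "p < 1"
    unfolding p_def using q power_strict_decreasing[of 0 "card Om" q] by simp_all
  interpret independent_line "Pi_pmf A False (\<lambda>_. bernoulli_pmf q)" "line_empty pos good Om" pp
    unfolding pp_def p_def using q by (intro grid_lines_independent[OF inj A]) auto
  define n where "n = nat (hi + 1 - lo)"
  have I: "{lo..hi} = {lo..<lo + int n}" unfolding n_def by auto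
  have "measure_pmf.prob (Pi_pmf A False (\<lambda>_. bernoulli_pmf q)) (no_run k (line_empty pos good Om) {lo..<lo + int n})
     \<le> f_fun k p powr (real n - (real k - 1) - real k * real (card {x\<in>{lo..<lo + int n}. pp x = 0}))"
    by (rule no_run_bound[OF k f_fun_basic(1,2)[OF k p] eq_refl[OF f_fun_renewal[OF k p]]])
      (simp add: pp_def)
  moreover have "{u\<in>{lo..<lo + int n}. pp u = 0} = {u\<in>{lo..hi}. \<not> good u}"
    unfolding pp_def I using p by auto
  ultimately show ?thesis unfolding p_def I by simp
qed

lemma two_strips_no_run_bound:
  fixes pos :: "int \<Rightarrow> int \<Rightarrow> 'a" and A :: "'a set"
  assumes inj: "\<And>u v u' v'. pos u v = pos u' v' \<Longrightarrow> u = u' \<and> v = v'"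
    and A: "finite A" "case_prod pos ` ({u. good u} \<times> Om) \<subseteq> A"
    and q: "0 < q" "q < 1" and k: "k \<ge> 1" and Om: "finite Om" "Om \<noteq> {}"
    and J1: "J1 = {lo1..hi1}" and J2: "J2 = {lo2..hi2}"
    and bad: "card {u\<in>J1. \<not> good u} + card {u\<in>J2. \<not> good u} \<le> N"
  shows "measure_pmf.prob (Pi_pmf A False (\<lambda>_. bernoulli_pmf q)) (no_run k (line_empty pos good Om) J1)
       * measure_pmf.prob (Pi_pmf A False (\<lambda>_. bernoulli_pmf q)) (no_run k (line_empty pos good Om) J2)
     \<le> f_fun k (q ^ card Om) powr (real (card J1 + card J2) - 2 * (real k - 1) - real k * real N)"
proof -
  define f where "f = f_fun k (q ^ card Om)"
  have "card Om > 0" using Om by (simp add: card_gt_0_iff)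
  then have "0 < q ^ card Om" "q ^ card Om < 1"
    using q power_strict_decreasing[of 0 "card Om" q] by simp_all
  then have f: "0 < f" "f \<le> 1" unfolding f_def using f_fun_basic[OF k] by auto
  define e where "e J = real (card J) - (real k - 1) - real k * real (card {u\<in>J. \<not> good u})" for J
  have "measure_pmf.prob (Pi_pmf A False (\<lambda>_. bernoulli_pmf q)) (no_run k (line_empty pos good Om) J1)
       * measure_pmf.prob (Pi_pmf A False (\<lambda>_. bernoulli_pmf q)) (no_run k (line_empty pos good Om) J2)
      \<le> f powr e J1 * f powr e J2"
    unfolding f_def e_def J1 J2
    by (intro mult_mono line_no_run_bound[OF inj A q k Om]) auto
  also have "\<dots> = f powr (e J1 + e J2)" by (simp add: powr_add)
  also have "\<dots> \<le> f powr (real (card J1 + card J2) - 2 * (real k - 1) - real k * real N)"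
  proof (intro powr_mono' f)
    have "real k * (real (card {u\<in>J1. \<not> good u}) + real (card {u\<in>J2. \<not> good u})) \<le> real k * real N"
      using bad by (intro mult_left_mono) (auto simp flip: of_nat_add)
    then show "real (card J1 + card J2) - 2 * (real k - 1) - real k * real N \<le> e J1 + e J2"
      unfolding e_def by (simp add: algebra_simps)
  qed (use f in auto)
  finally show ?thesis unfolding f_def .
qed

lemma sum_Pow_power:
  fixes x y :: real
  assumes "finite K"
  shows "(\<Sum>T\<in>Pow K. x ^ card T * y ^ card (K - T)) = (x + y) ^ card K"
proof -
  have "(x + y) ^ card K = (\<Prod>z\<in>K. x + y)" by simp
  also have "\<dots> = (\<Sum>T\<in>Pow K. (\<Prod>z\<in>T. x) * (\<Prod>z\<in>K - T. y))"
    by (rule prod_add[OF assms])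
  also have "\<dots> = (\<Sum>T\<in>Pow K. x ^ card T * y ^ card (K - T))" by simp
  finally show ?thesis ..
qed

text \<open>The elementary estimate turning the corner sum into the error term l m s exp(...):
  with q = exp(-s), one has 1 - q \<le> s and hence (1 - q) \<theta> + q \<le> exp(s \<theta>) for \<theta> \<ge> 1.\<close>
lemma corner_weight_le_exp:
  fixes s \<theta> :: real
  assumes s: "s > 0" and \<theta>: "\<theta> \<ge> 1"
  shows "(1 - exp (- s)) * \<theta> + exp (- s) \<le> exp (s * \<theta>)"
proof -
  have q: "1 - exp (- s) \<le> s" using exp_ge_add_one_self[of "- s"] by simp
  have "(1 - exp (- s)) * \<theta> + exp (- s) = 1 + (1 - exp (- s)) * (\<theta> - 1)" by (simp add: algebra_simps)
  also have "\<dots> \<le> exp ((1 - exp (- s)) * (\<theta> - 1))" by (rule exp_ge_add_one_self)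
  also have "\<dots> \<le> exp (s * \<theta>)"
  proof -
    have "(1 - exp (- s)) * (\<theta> - 1) \<le> s * (\<theta> - 1)" using q \<theta> by (intro mult_right_mono) auto
    also have "\<dots> \<le> s * \<theta>" using s by simp
    finally show ?thesis by simp
  qed
  finally show ?thesis .
qed

lemma exp_powr_shift:
  fixes g L :: real
  shows "exp (- g) powr (L - real k * real n) = exp (- L * g) * exp (real k * g) ^ n"
  by (simp add: exp_powr_real exp_of_nat_mult[symmetric] exp_add[symmetric] algebra_simps)

text \<open>The frame of R' around R: columns Lc, Xm, Rc (left strip, columns of R, right strip)
  and rows Bc, Ym, Tc (bottom strip, rows of R, top strip).  The strips are intervals.\<close>
locale strip_frame =
  fixes Lc Rc Xm Bc Tc Ym :: "int set"
  assumes strip_intervals: "\<exists>lo hi. Lc = {lo..hi}" "\<exists>lo hi. Rc = {lo..hi}"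
      "\<exists>lo hi. Bc = {lo..hi}" "\<exists>lo hi. Tc = {lo..hi}"
    and finite_middle: "finite Xm" "finite Ym"
    and middle_nonempty: "Xm \<noteq> {}" "Ym \<noteq> {}"
    and disjoint_cols: "Lc \<inter> Rc = {}" "Lc \<inter> Xm = {}" "Rc \<inter> Xm = {}"
    and disjoint_rows: "Bc \<inter> Tc = {}" "Bc \<inter> Ym = {}" "Tc \<inter> Ym = {}"
begin

definition frame_cols :: "int set" where "frame_cols = Lc \<union> Rc \<union> Xm"
definition frame_rows :: "int set" where "frame_rows = Bc \<union> Tc \<union> Ym"
definition side_cols :: "int set" where "side_cols = Lc \<union> Rc"
definition side_rows :: "int set" where "side_rows = Bc \<union> Tc"

definition corners :: "(int \<times> int) set" where "corners = side_cols \<times> side_rows"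

definition frame_event :: "nat \<Rightarrow> config set" where
  "frame_event k = {\<omega>. \<not> empty_cols k Lc frame_rows \<omega> \<and> \<not> empty_cols k Rc frame_rows \<omega>
                     \<and> \<not> empty_rows k Bc frame_cols \<omega> \<and> \<not> empty_rows k Tc frame_cols \<omega>}"

definition corner_pattern :: "(int \<times> int) set \<Rightarrow> config set" where
  "corner_pattern T = {\<omega>. {z\<in>corners. \<not> \<omega> z} = T}"

text \<open>Given the corner pattern T, a side column is empty iff it avoids T and its part in the
  rows of R is empty; similarly for side rows.\<close>
definition col_empty :: "(int \<times> int) set \<Rightarrow> int \<Rightarrow> config \<Rightarrow> bool" where
  "col_empty T = line_empty Pair (\<lambda>u. u \<in> side_cols \<and> (\<forall>v\<in>side_rows. (u, v) \<notin> T)) Ym"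

definition row_empty :: "(int \<times> int) set \<Rightarrow> int \<Rightarrow> config \<Rightarrow> bool" where
  "row_empty T = line_empty (\<lambda>u v. (v, u)) (\<lambda>u. u \<in> side_rows \<and> (\<forall>v\<in>side_cols. (v, u) \<notin> T)) Xm"

definition col_strips_ok :: "nat \<Rightarrow> (int \<times> int) set \<Rightarrow> config set" where
  "col_strips_ok k T = no_run k (col_empty T) Lc \<inter> no_run k (col_empty T) Rc"

definition row_strips_ok :: "nat \<Rightarrow> (int \<times> int) set \<Rightarrow> config set" where
  "row_strips_ok k T = no_run k (row_empty T) Bc \<inter> no_run k (row_empty T) Tc"

definition corner_piece :: "nat \<Rightarrow> (int \<times> int) set \<Rightarrow> config set" where
  "corner_piece k T = corner_pattern T \<inter> col_strips_ok k T \<inter> row_strips_ok k T"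

lemma finite_strips: "finite Lc" "finite Rc" "finite Bc" "finite Tc"
  using strip_intervals by auto

lemma finite_frame: "finite (frame_cols \<times> frame_rows)"
  using finite_strips finite_middle unfolding frame_cols_def frame_rows_def by auto

lemma finite_corners: "finite corners"
  using finite_strips unfolding corners_def side_cols_def side_rows_def by auto

lemma card_corners: "card corners = (card Lc + card Rc) * (card Bc + card Tc)"
  using finite_strips disjoint_cols disjoint_rows
  unfolding corners_def side_cols_def side_rows_def by (simp add: card_cartesian_product card_Un_disjoint)

lemma frame_event_cover: "frame_event k \<subseteq> (\<Union>T\<in>Pow corners. corner_piece k T)"
proof
  fix \<omega> assume \<omega>: "\<omega> \<in> frame_event k"
  define T where "T = {z\<in>corners. \<not> \<omega> z}"
  have col_full: "\<forall>y\<in>frame_rows. \<omega> (x, y)" if "col_empty T x \<omega>" for x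
    using that unfolding col_empty_def line_empty_def T_def corners_def frame_rows_def side_rows_def
    by blast
  have row_full: "\<forall>x\<in>frame_cols. \<omega> (x, y)" if "row_empty T y \<omega>" for y
    using that unfolding row_empty_def line_empty_def T_def corners_def frame_cols_def side_cols_def
    by blast
  have cols: "\<omega> \<in> no_run k (col_empty T) J" if "\<not> empty_cols k J frame_rows \<omega>" for J
    using that col_full unfolding no_run_def empty_cols_def by blast
  have rows: "\<omega> \<in> no_run k (row_empty T) J" if "\<not> empty_rows k J frame_cols \<omega>" for J
    using that row_full unfolding no_run_def empty_rows_def by blast
  have "T \<in> Pow corners" "\<omega> \<in> corner_pattern T" unfolding T_def corner_pattern_def by auto
  then show "\<omega> \<in> (\<Union>T\<in>Pow corners. corner_piece k T)"
    using \<omega> cols rows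
    unfolding frame_event_def corner_piece_def col_strips_ok_def row_strips_ok_def by blast
qed

lemma depends_on_col_strip: "depends_on (J \<times> Ym) (no_run k (col_empty T) J)"
proof -
  have "depends_on (case_prod Pair ` (J \<times> Ym)) (no_run k (col_empty T) J)"
    unfolding col_empty_def by (rule depends_on_line_empty[OF determined_by_no_run[OF order_refl]])
  then show ?thesis by simp
qed

lemma depends_on_row_strip: "depends_on (Xm \<times> J) (no_run k (row_empty T) J)"
proof -
  have "case_prod (\<lambda>u v. (v, u)) ` (J \<times> Xm) = Xm \<times> J" by auto
  moreover have "depends_on (case_prod (\<lambda>u v. (v, u)) ` (J \<times> Xm)) (no_run k (row_empty T) J)"
    unfolding row_empty_def by (rule depends_on_line_empty[OF determined_by_no_run[OF order_refl]])
  ultimately show ?thesis by simp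
qed

lemma depends_on_corner_pattern: "depends_on corners (corner_pattern T)"
  unfolding depends_on_def corner_pattern_def by auto

text \<open>Each nonempty corner site spoils at most one side column and one side row.\<close>
lemma inadmissible_cols_le:
  assumes "T \<subseteq> corners"
  shows "card {u\<in>Lc. \<not> (u \<in> side_cols \<and> (\<forall>v\<in>side_rows. (u, v) \<notin> T))}
       + card {u\<in>Rc. \<not> (u \<in> side_cols \<and> (\<forall>v\<in>side_rows. (u, v) \<notin> T))} \<le> card T"
proof -
  have fin: "finite T" using assms finite_corners by (rule finite_subset)
  have "card ({u\<in>Lc. \<not> (u \<in> side_cols \<and> (\<forall>v\<in>side_rows. (u, v) \<notin> T))}
           \<union> {u\<in>Rc. \<not> (u \<in> side_cols \<and> (\<forall>v\<in>side_rows. (u, v) \<notin> T))}) \<le> card (fst ` T)"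
    using fin by (intro card_mono) (force simp: side_cols_def)+
  also have "\<dots> \<le> card T" using fin by (rule card_image_le)
  finally show ?thesis using disjoint_cols finite_strips by (simp add: card_Un_disjoint disjoint_iff)
qed

lemma inadmissible_rows_le:
  assumes "T \<subseteq> corners"
  shows "card {u\<in>Bc. \<not> (u \<in> side_rows \<and> (\<forall>v\<in>side_cols. (v, u) \<notin> T))}
       + card {u\<in>Tc. \<not> (u \<in> side_rows \<and> (\<forall>v\<in>side_cols. (v, u) \<notin> T))} \<le> card T"
proof -
  have fin: "finite T" using assms finite_corners by (rule finite_subset)
  have "card ({u\<in>Bc. \<not> (u \<in> side_rows \<and> (\<forall>v\<in>side_cols. (v, u) \<notin> T))}
           \<union> {u\<in>Tc. \<not> (u \<in> side_rows \<and> (\<forall>v\<in>side_cols. (v, u) \<notin> T))}) \<le> card (snd ` T)"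
    using fin by (intro card_mono) (force simp: side_rows_def)+
  also have "\<dots> \<le> card T" using fin by (rule card_image_le)
  finally show ?thesis using disjoint_rows finite_strips by (simp add: card_Un_disjoint disjoint_iff)
qed

text \<open>The corner pattern and the four strip events depend on pairwise disjoint sets of sites
  (the corners, and the parts of the strips crossing R), hence are independent.\<close>
lemma corner_piece_factorise:
  fixes P :: "int \<times> int \<Rightarrow> bool pmf" and dflt :: bool
  defines "\<mu> \<equiv> Pi_pmf (frame_cols \<times> frame_rows) dflt P"
  shows "measure_pmf.prob \<mu> (corner_piece k T)
   = measure_pmf.prob \<mu> (corner_pattern T)
     * (measure_pmf.prob \<mu> (no_run k (col_empty T) Lc) * measure_pmf.prob \<mu> (no_run k (col_empty T) Rc))
     * (measure_pmf.prob \<mu> (no_run k (row_empty T) Bc) * measure_pmf.prob \<mu> (no_run k (row_empty T) Tc))"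
proof -
  note indep = Pi_pmf_indep[OF finite_frame, of _ _ _ _ dflt P, folded \<mu>_def]
  have cols: "depends_on (side_cols \<times> Ym) (col_strips_ok k T)"
    unfolding side_cols_def col_strips_ok_def
    by (intro depends_on_Int depends_on_mono[OF depends_on_col_strip]) auto
  have rows: "depends_on (Xm \<times> side_rows) (row_strips_ok k T)"
    unfolding side_rows_def row_strips_ok_def
    by (intro depends_on_Int depends_on_mono[OF depends_on_row_strip]) auto
  have strips: "depends_on (side_cols \<times> Ym \<union> Xm \<times> side_rows) (col_strips_ok k T \<inter> row_strips_ok k T)"
    by (intro depends_on_Int depends_on_mono[OF cols] depends_on_mono[OF rows]) auto
  have "measure_pmf.prob \<mu> (corner_piece k T)
      = measure_pmf.prob \<mu> (corner_pattern T) * measure_pmf.prob \<mu> (col_strips_ok k T \<inter> row_strips_ok k T)"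
    unfolding corner_piece_def Int_assoc using disjoint_cols disjoint_rows
    by (intro indep[OF _ depends_on_corner_pattern strips])
      (auto simp: corners_def side_cols_def side_rows_def)
  also have "measure_pmf.prob \<mu> (col_strips_ok k T \<inter> row_strips_ok k T)
      = measure_pmf.prob \<mu> (col_strips_ok k T) * measure_pmf.prob \<mu> (row_strips_ok k T)"
    using disjoint_rows by (intro indep[OF _ cols rows]) (auto simp: side_rows_def)
  also have "measure_pmf.prob \<mu> (col_strips_ok k T)
    = measure_pmf.prob \<mu> (no_run k (col_empty T) Lc) * measure_pmf.prob \<mu> (no_run k (col_empty T) Rc)"
    unfolding col_strips_ok_def using disjoint_cols
    by (intro indep[OF _ depends_on_col_strip depends_on_col_strip]) auto
  also have "measure_pmf.prob \<mu> (row_strips_ok k T)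
    = measure_pmf.prob \<mu> (no_run k (row_empty T) Bc) * measure_pmf.prob \<mu> (no_run k (row_empty T) Tc)"
    unfolding row_strips_ok_def using disjoint_rows
    by (intro indep[OF _ depends_on_row_strip depends_on_row_strip]) auto
  finally show ?thesis by (simp only: mult.assoc)
qed

text \<open>Bound for a fixed corner pattern T: the pattern has its Bernoulli probability and each pair
  of parallel strips pays a factor f_k per line, with one extra factor f_k^(-k) for each line
  spoilt by a nonempty corner site.\<close>
lemma corner_piece_bound:
  assumes k: "k \<ge> 1" and s: "s > 0" and T: "T \<subseteq> corners"
  shows "measure_pmf.prob (site_pmf s (frame_cols \<times> frame_rows)) (corner_piece k T)
   \<le> (1 - exp (- s)) ^ card T * exp (- s) ^ card (corners - T)
     * f_fun k (exp (- s) ^ card Ym) powr (real (card Lc + card Rc) - 2 * (real k - 1) - real k * real (card T))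
     * f_fun k (exp (- s) ^ card Xm) powr (real (card Bc + card Tc) - 2 * (real k - 1) - real k * real (card T))"
proof -
  define q where "q = exp (- s)"
  define \<mu> where "\<mu> = Pi_pmf (frame_cols \<times> frame_rows) False (\<lambda>_. bernoulli_pmf q)"
  have q: "0 < q" "q < 1" unfolding q_def using s by auto
  obtain lL hL lR hR lB hB lT hT where
    strips: "Lc = {lL..hL}" "Rc = {lR..hR}" "Bc = {lB..hB}" "Tc = {lT..hT}"
    using strip_intervals by blast
  have "corners \<subseteq> frame_cols \<times> frame_rows"
    unfolding corners_def side_cols_def side_rows_def frame_cols_def frame_rows_def by auto
  then have pattern: "measure_pmf.prob \<mu> (corner_pattern T) = (1 - q) ^ card T * q ^ card (corners - T)"
    unfolding \<mu>_def corner_pattern_def using q T by (intro prob_Pi_bernoulli_pattern finite_frame) auto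
  have cols: "measure_pmf.prob \<mu> (no_run k (col_empty T) Lc) * measure_pmf.prob \<mu> (no_run k (col_empty T) Rc)
      \<le> f_fun k (q ^ card Ym) powr (real (card Lc + card Rc) - 2 * (real k - 1) - real k * real (card T))"
    unfolding \<mu>_def col_empty_def
    by (rule two_strips_no_run_bound[OF _ finite_frame _ q k finite_middle(2) middle_nonempty(2)
          strips(1,2) inadmissible_cols_le[OF T]])
      (auto simp: frame_cols_def frame_rows_def side_cols_def)
  have rows: "measure_pmf.prob \<mu> (no_run k (row_empty T) Bc) * measure_pmf.prob \<mu> (no_run k (row_empty T) Tc)
      \<le> f_fun k (q ^ card Xm) powr (real (card Bc + card Tc) - 2 * (real k - 1) - real k * real (card T))"
    unfolding \<mu>_def row_empty_def
    by (rule two_strips_no_run_bound[OF _ finite_frame _ q k finite_middle(1) middle_nonempty(1)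
          strips(3,4) inadmissible_rows_le[OF T]])
      (auto simp: frame_cols_def frame_rows_def side_rows_def)
  have "measure_pmf.prob \<mu> (corner_piece k T)
   \<le> (1 - q) ^ card T * q ^ card (corners - T)
     * f_fun k (q ^ card Ym) powr (real (card Lc + card Rc) - 2 * (real k - 1) - real k * real (card T))
     * f_fun k (q ^ card Xm) powr (real (card Bc + card Tc) - 2 * (real k - 1) - real k * real (card T))"
    unfolding \<mu>_def corner_piece_factorise unfolding \<mu>_def[symmetric] pattern
    using q by (intro mult_mono order_refl cols rows) auto
  moreover have "site_pmf s (frame_cols \<times> frame_rows) = \<mu>" unfolding site_pmf_def \<mu>_def q_def ..
  ultimately show ?thesis unfolding q_def by simp
qed

text \<open>The same bound in terms of g_k, writing q = exp(-s):
  \<theta> = exp(k (g_k(a s) + g_k(b s))) is the price of one nonempty corner site.\<close>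
lemma corner_piece_bound_exp:
  assumes k: "k \<ge> 1" and s: "s > 0" and T: "T \<subseteq> corners"
  defines "l \<equiv> card Lc + card Rc" and "m \<equiv> card Bc + card Tc"
    and "ga \<equiv> g_fun k (real (card Xm) * s)" and "gb \<equiv> g_fun k (real (card Ym) * s)"
  shows "measure_pmf.prob (site_pmf s (frame_cols \<times> frame_rows)) (corner_piece k T)
    \<le> exp (- (real m - 2 * (real k - 1)) * ga - (real l - 2 * (real k - 1)) * gb)
       * (((1 - exp (- s)) * exp (real k * (ga + gb))) ^ card T * exp (- s) ^ card (corners - T))"
proof -
  have pos: "real (card Xm) * s > 0" "real (card Ym) * s > 0"
    using s finite_middle middle_nonempty by (auto simp: card_gt_0_iff)
  have fa: "f_fun k (exp (- s) ^ card Xm) = exp (- ga)" and fb: "f_fun k (exp (- s) ^ card Ym) = exp (- gb)"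
    unfolding ga_def gb_def using f_fun_exp_g_fun(1)[OF k pos(1)] f_fun_exp_g_fun(1)[OF k pos(2)]
    by (simp_all add: exp_of_nat_mult[symmetric])
  have "exp (- gb) powr (real l - 2 * (real k - 1) - real k * real (card T))
        * exp (- ga) powr (real m - 2 * (real k - 1) - real k * real (card T))
      = exp (- (real m - 2 * (real k - 1)) * ga - (real l - 2 * (real k - 1)) * gb)
        * exp (real k * (ga + gb)) ^ card T"
    unfolding exp_powr_shift by (simp add: exp_add[symmetric] exp_of_nat_mult[symmetric] algebra_simps)
  then show ?thesis
    using corner_piece_bound[OF k s T] unfolding l_def[symmetric] m_def[symmetric] fa fb
    by (simp add: power_mult_distrib mult_ac)
qed

text \<open>The estimate for D(R, R') in frame form: sum the corner-pattern bound over all patterns;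
  the sum over patterns factorises over the l m corner sites.\<close>
lemma frame_event_bound:
  assumes k: "k \<ge> 1" and s: "s > 0"
  defines "l \<equiv> card Lc + card Rc" and "m \<equiv> card Bc + card Tc"
    and "ga \<equiv> g_fun k (real (card Xm) * s)" and "gb \<equiv> g_fun k (real (card Ym) * s)"
  shows "measure_pmf.prob (site_pmf s (frame_cols \<times> frame_rows)) (frame_event k)
    \<le> exp (- (real m - 2 * (real k - 1)) * ga - (real l - 2 * (real k - 1)) * gb
           + real l * real m * s * exp (real k * (ga + gb)))"
proof -
  define q where "q = exp (- s)"
  define \<theta> where "\<theta> = exp (real k * (ga + gb))"
  define c where "c = exp (- (real m - 2 * (real k - 1)) * ga - (real l - 2 * (real k - 1)) * gb)"
  have q: "0 \<le> q" "q \<le> 1" unfolding q_def using s by auto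
  have pos: "real (card Xm) * s > 0" "real (card Ym) * s > 0"
    using s finite_middle middle_nonempty by (auto simp: card_gt_0_iff)
  have "ga \<ge> 0" "gb \<ge> 0" unfolding ga_def gb_def using f_fun_exp_g_fun(2)[OF k] pos by auto
  then have \<theta>: "\<theta> \<ge> 1" unfolding \<theta>_def by simp
  have "measure_pmf.prob (site_pmf s (frame_cols \<times> frame_rows)) (frame_event k)
      \<le> (\<Sum>T\<in>Pow corners. measure_pmf.prob (site_pmf s (frame_cols \<times> frame_rows)) (corner_piece k T))"
    using frame_event_cover[of k] finite_corners
    by (intro order.trans[OF measure_pmf.finite_measure_mono
          measure_pmf.finite_measure_subadditive_finite]) auto
  also have "\<dots> \<le> (\<Sum>T\<in>Pow corners. c * (((1 - q) * \<theta>) ^ card T * q ^ card (corners - T)))"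
    unfolding c_def q_def \<theta>_def l_def m_def ga_def gb_def
    by (intro sum_mono corner_piece_bound_exp[OF k s]) auto
  also have "\<dots> = c * ((1 - q) * \<theta> + q) ^ (l * m)"
    unfolding sum_distrib_left[symmetric] sum_Pow_power[OF finite_corners] card_corners l_def m_def ..
  also have "\<dots> \<le> c * exp (s * \<theta>) ^ (l * m)"
    using corner_weight_le_exp[OF s \<theta>] q \<theta> unfolding c_def q_def
    by (intro mult_left_mono power_mono) auto
  also have "\<dots> = exp (- (real m - 2 * (real k - 1)) * ga - (real l - 2 * (real k - 1)) * gb
           + real l * real m * s * \<theta>)"
    unfolding c_def exp_of_nat_mult[symmetric] exp_add[symmetric] by (simp add: algebra_simps)
  finally show ?thesis unfolding \<theta>_def .
qed

end

lemma rect_subset_bounds: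
  assumes "a \<ge> 1" "b \<ge> 1" "rect x0 y0 a b \<subseteq> rect x0' y0' a' b'"
  shows "x0' \<le> x0" "x0 + int a \<le> x0' + int a'" "y0' \<le> y0" "y0 + int b \<le> y0' + int b'"
proof -
  have "(x0, y0) \<in> rect x0 y0 a b" "(x0 + int a - 1, y0 + int b - 1) \<in> rect x0 y0 a b"
    using assms(1,2) unfolding rect_def by auto
  then have "(x0, y0) \<in> rect x0' y0' a' b'" "(x0 + int a - 1, y0 + int b - 1) \<in> rect x0' y0' a' b'"
    using assms(3) by auto
  then show "x0' \<le> x0" "x0 + int a \<le> x0' + int a'" "y0' \<le> y0" "y0 + int b \<le> y0' + int b'"
    unfolding rect_def by auto
qed

theorem mainTheorem11:
  fixes k a b l m :: nat and s :: real and x0 y0 x0' y0' :: int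
  assumes "k \<ge> 1" and "s > 0" and "a \<ge> 1" and "b \<ge> 1"
    and "rect x0 y0 a b \<subseteq> rect x0' y0' (a + l) (b + m)"
  shows "measure_pmf.prob (site_pmf s (rect x0' y0' (a + l) (b + m)))
           (D_event k x0 y0 a b x0' y0' (a + l) (b + m))
         \<le> exp (- (real m - 2 * (real k - 1)) * g_fun k (real a * s)
                - (real l - 2 * (real k - 1)) * g_fun k (real b * s)
                + real l * real m * s * exp (real k * (g_fun k (real a * s) + g_fun k (real b * s))))"
proof -
  note bounds = rect_subset_bounds[OF assms(3-5)]
  interpret strip_frame "{x0'..x0 - 1}" "{x0 + int a..x0' + int (a + l) - 1}" "{x0..x0 + int a - 1}"
    "{y0'..y0 - 1}" "{y0 + int b..y0' + int (b + m) - 1}" "{y0..y0 + int b - 1}"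
    using assms(3,4) by unfold_locales auto
  have cols: "frame_cols = {x0'..x0' + int (a + l) - 1}"
    unfolding frame_cols_def using bounds by auto
  have rows: "frame_rows = {y0'..y0' + int (b + m) - 1}"
    unfolding frame_rows_def using bounds by auto
  have "rect x0' y0' (a + l) (b + m) = frame_cols \<times> frame_rows"
    unfolding rect_def cols rows ..
  moreover have "D_event k x0 y0 a b x0' y0' (a + l) (b + m) = frame_event k"
    unfolding D_event_def frame_event_def cols rows ..
  moreover have "card {x0'..x0 - 1} + card {x0 + int a..x0' + int (a + l) - 1} = l"
    "card {y0'..y0 - 1} + card {y0 + int b..y0' + int (b + m) - 1} = m"
    using bounds by auto
  ultimately show ?thesis using frame_event_bound[OF assms(1,2)] by simp
qed

end
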